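(* Let $V$ be a vector space and $Mag(V)$ the free unital magmatic algebra with its reduced coproduct $\delta$. For a planar binary rooted tree $t$ with $r$ leaves and $v_1,\dots,v_r\in V$, $$\delta(t;v_1\dots v_r)=\sum_{i=1}^{r-1}(t^i_{(1)};v_1\dots v_i)\otimes(t^i_{(2)};v_{i+1}\dots v_r).$$
   Context: $Mag(V)=\bigoplus_{n\ge0}\mathbb K[Y_{n-1}]\otimes V^{\otimes n}$, $Y_{n-1}$ the set of planar binary rooted trees with $n$ leaves ($n=0$ summand $\mathbb K1$), product $(t;v_1\dots v_p)\cdot(s;v_{p+1}\dots v_{p+q})=(t\vee s;v_1\dots v_{p+q})$ by grafting on a new root. $\Delta$ is the unique linear map with $\Delta(1)=1\otimes1$, $\Delta(v)=v\otimes1+1\otimes v$ ($v\in V$) and $\Delta(x\cdot y)=\Delta(x)\cdot(1\otimes y)+(x\otimes1)\cdot\Delta(y)-x\otimes y$ (componentwise product on the tensor square); $\delta(x)=\Delta(x)-x\otimes1-1\otimes x$ on the augmentation ideal. Splitting: number the leaves of $t$ from $1$ to $r$ left to right; for $1\le i<r$, $t^i_{(1)}$ is the part of $t$ lying on the left of the path from leaf $i$ to the root (this path included) and $t^i_{(2)}$ is the part of $t$ lying on the right of the path from leaf $i+1$ to the root (this path included), each regarded as a planar binary tree (with $i$, resp. $r-i$, leaves) after erasing vertices with only one input. E.g. for $t=(x_1x_2)(x_3x_4)$ split at $i=2$, one gets $x_1x_2$ and $x_3x_4$. *)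

theory Defs
  imports "HOL-Library.Poly_Mapping"
begin

text \<open>Planar binary rooted trees with at least one leaf; leaves may carry labels.
  Unlabelled trees (the set Y) are unit ltree.\<close>
datatype 'x ltree = Lf 'x | Nd "'x ltree" "'x ltree"

type_synonym pbtree = "unit ltree"

fun nleaves :: "'x ltree \<Rightarrow> nat" where
  "nleaves (Lf _) = 1"
| "nleaves (Nd a b) = nleaves a + nleaves b"

text \<open>Part of the tree spanned by its first n leaves (all vertices on the paths from
  leaves 1..n to the root), vertices with one input erased; None if n = 0.\<close>
fun ltake :: "nat \<Rightarrow> 'x ltree \<Rightarrow> 'x ltree option" where
  "ltake n (Lf x) = (if n = 0 then None else Some (Lf x))"
| "ltake n (Nd a b) =
     (if n \<le> nleaves a then ltake n a
      else (case ltake (n - nleaves a) b of None \<Rightarrow> Some a | Some c \<Rightarrow> Some (Nd a c)))"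

text \<open>Part of the tree spanned by the leaves after the n-th one, vertices with one
  input erased; None if no leaf remains.\<close>
fun ldrop :: "nat \<Rightarrow> 'x ltree \<Rightarrow> 'x ltree option" where
  "ldrop n (Lf x) = (if n = 0 then Some (Lf x) else None)"
| "ldrop n (Nd a b) =
     (if nleaves a \<le> n then ldrop (n - nleaves a) b
      else (case ldrop n a of None \<Rightarrow> Some b | Some c \<Rightarrow> Some (Nd c b)))"

text \<open>The splitting: split1 i t = t^i_(1) (left of path from leaf i to the root, path
  included), split2 i t = t^i_(2) (right of path from leaf i+1 to the root, path included).\<close>
definition split1 :: "nat \<Rightarrow> 'x ltree \<Rightarrow> 'x ltree" where
  "split1 i t = the (ltake i t)"
definition split2 :: "nat \<Rightarrow> 'x ltree \<Rightarrow> 'x ltree" where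
  "split2 i t = the (ldrop i t)"

definition smul :: "'k::comm_ring_1 \<Rightarrow> ('a \<Rightarrow>\<^sub>0 'k) \<Rightarrow> ('a \<Rightarrow>\<^sub>0 'k)" where
  "smul c f = Poly_Mapping.map (\<lambda>a. c * a) f"

definition linext :: "('b \<Rightarrow> ('c \<Rightarrow>\<^sub>0 'k::comm_ring_1)) \<Rightarrow> ('b \<Rightarrow>\<^sub>0 'k) \<Rightarrow> ('c \<Rightarrow>\<^sub>0 'k)" where
  "linext g f = (\<Sum>b\<in>Poly_Mapping.keys f. smul (Poly_Mapping.lookup f b) (g b))"

definition bilinext :: "('b \<Rightarrow> 'c \<Rightarrow> ('d \<Rightarrow>\<^sub>0 'k::comm_ring_1)) \<Rightarrow> ('b \<Rightarrow>\<^sub>0 'k) \<Rightarrow> ('c \<Rightarrow>\<^sub>0 'k) \<Rightarrow> ('d \<Rightarrow>\<^sub>0 'k)" where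
  "bilinext g f h = linext (\<lambda>b. linext (\<lambda>c. g b c) h) f"

text \<open>V is the K-vector space with basis 'x, i.e. finitely supported functions 'x to 'k (every vector space is of
  this form).  Mag(V) = direct sum over n of K[Y_{n-1}] \<otimes> V^{\<otimes>n} has as basis the planar binary trees
  with leaves labelled by basis vectors of V, plus the unit (None).\<close>
type_synonym ('x, 'k) mag = "'x ltree option \<Rightarrow>\<^sub>0 'k"
type_synonym ('x, 'k) mag2 = "('x ltree option \<times> 'x ltree option) \<Rightarrow>\<^sub>0 'k"

fun graft :: "'x ltree option \<Rightarrow> 'x ltree option \<Rightarrow> 'x ltree option" where
  "graft None y = y"
| "graft x None = x"
| "graft (Some a) (Some b) = Some (Nd a b)"

definition mag_one :: "('x, 'k::comm_ring_1) mag" where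
  "mag_one = Poly_Mapping.single None 1"

definition mag_bas :: "'x ltree \<Rightarrow> ('x, 'k::comm_ring_1) mag" where
  "mag_bas t = Poly_Mapping.single (Some t) 1"

definition mag_mult :: "('x, 'k::comm_ring_1) mag \<Rightarrow> ('x, 'k) mag \<Rightarrow> ('x, 'k) mag" where
  "mag_mult = bilinext (\<lambda>a b. Poly_Mapping.single (graft a b) 1)"

definition tensor :: "('x, 'k::comm_ring_1) mag \<Rightarrow> ('x, 'k) mag \<Rightarrow> ('x, 'k) mag2" where
  "tensor = bilinext (\<lambda>a b. Poly_Mapping.single (a, b) 1)"

definition mult2 :: "('x, 'k::comm_ring_1) mag2 \<Rightarrow> ('x, 'k) mag2 \<Rightarrow> ('x, 'k) mag2" where
  "mult2 = bilinext (\<lambda>(a1, b1) (a2, b2). Poly_Mapping.single (graft a1 a2, graft b1 b2) 1)"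

definition mag_inj :: "('x \<Rightarrow>\<^sub>0 'k::comm_ring_1) \<Rightarrow> ('x, 'k) mag" where
  "mag_inj v = linext (\<lambda>x. Poly_Mapping.single (Some (Lf x)) 1) v"

fun mag_elt :: "pbtree \<Rightarrow> ('x \<Rightarrow>\<^sub>0 'k::comm_ring_1) list \<Rightarrow> ('x, 'k) mag" where
  "mag_elt (Lf _) vs = mag_inj (hd vs)"
| "mag_elt (Nd a b) vs =
     mag_mult (mag_elt a (take (nleaves a) vs)) (mag_elt b (drop (nleaves a) vs))"

fun DeltaT :: "'x ltree \<Rightarrow> ('x, 'k::comm_ring_1) mag2" where
  "DeltaT (Lf x) = Poly_Mapping.single (Some (Lf x), None) 1 + Poly_Mapping.single (None, Some (Lf x)) 1"
| "DeltaT (Nd a b) =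
     mult2 (DeltaT a) (tensor mag_one (mag_bas b))
   + mult2 (tensor (mag_bas a) mag_one) (DeltaT b)
   - tensor (mag_bas a) (mag_bas b)"

fun DeltaB :: "'x ltree option \<Rightarrow> ('x, 'k::comm_ring_1) mag2" where
  "DeltaB None = Poly_Mapping.single (None, None) 1"
| "DeltaB (Some t) = DeltaT t"

definition Delta :: "('x, 'k::comm_ring_1) mag \<Rightarrow> ('x, 'k) mag2" where
  "Delta = linext DeltaB"

definition delta :: "('x, 'k::comm_ring_1) mag \<Rightarrow> ('x, 'k) mag2" where
  "delta x = Delta x - tensor x mag_one - tensor mag_one x"

end

theory Submission imports Defs begin

(* Extending the defining recursion of Delta bilinearly from basis trees to all of Mag(V)
   gives delta(x y) = delta(x) (1 \<otimes> y) + (x \<otimes> 1) delta(y) + x \<otimes> y.  For t = a \<or> b,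
   with x = (a; v_1 ... v_p) and y = (b; v_(p+1) ... v_r), this matches the splittings of t
   term by term: those at i < p come from delta(x), the right factor being grafted with b;
   those at p + j come from delta(y), the left factor being grafted with a; the splitting
   at p itself is x \<otimes> y. *)

section \<open>Linear maps between free modules\<close>

lemma lookup_smul [simp]: "Poly_Mapping.lookup (smul c f) k = c * Poly_Mapping.lookup f k"
  by (simp add: smul_def Poly_Mapping.map.rep_eq when_def)

lemma smul_add: "smul c (x + y) = smul c x + smul c y"
  by (rule poly_mapping_eqI) (simp add: lookup_add algebra_simps)

lemma smul_diff: "smul c (x - y) = smul c x - smul c y"
  by (rule poly_mapping_eqI) (simp add: lookup_minus algebra_simps)

lemma smul_add_left: "smul (c + d) x = smul c x + smul d x"
  by (rule poly_mapping_eqI) (simp add: lookup_add algebra_simps)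

lemma smul_smul: "smul c (smul d x) = smul (c * d) x"
  by (rule poly_mapping_eqI) (simp add: algebra_simps)

lemma smul_0_left [simp]: "smul 0 x = 0"
  by (rule poly_mapping_eqI) simp

lemma smul_1 [simp]: "smul 1 x = x"
  by (rule poly_mapping_eqI) simp

lemma smul_sum: "smul c (sum f A) = (\<Sum>a\<in>A. smul c (f a))"
  by (rule poly_mapping_eqI) (simp add: lookup_sum sum_distrib_left)

lemma keys_smul: "Poly_Mapping.keys (smul c x) \<subseteq> Poly_Mapping.keys x"
  by (auto simp: in_keys_iff)

lemma poly_mapping_eq_sum_singles:
  "f = (\<Sum>a\<in>Poly_Mapping.keys f. smul (Poly_Mapping.lookup f a) (Poly_Mapping.single a (1::'k::comm_ring_1)))"
proof (rule poly_mapping_eqI)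
  fix k
  show "Poly_Mapping.lookup f k = Poly_Mapping.lookup
          (\<Sum>a\<in>Poly_Mapping.keys f. smul (Poly_Mapping.lookup f a) (Poly_Mapping.single a 1)) k"
    by (cases "k \<in> Poly_Mapping.keys f")
      (auto simp: lookup_sum lookup_single when_def in_keys_iff if_distrib[where f = "\<lambda>z. _ * z"]
        cong: if_cong)
qed

lemma linext_eq_sum_superset:
  assumes "finite A" "Poly_Mapping.keys f \<subseteq> A"
  shows "linext g f = (\<Sum>b\<in>A. smul (Poly_Mapping.lookup f b) (g b))"
  unfolding linext_def
  by (rule sum.mono_neutral_left) (use assms in \<open>auto simp: in_keys_iff\<close>)

lemma linext_single [simp]: "linext g (Poly_Mapping.single a (1::'k::comm_ring_1)) = g a"
  by (simp add: linext_def)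

lemma bilinext_single [simp]:
  "bilinext g (Poly_Mapping.single a 1) (Poly_Mapping.single b 1) = g a b"
  by (simp add: bilinext_def)

definition lin_map :: "(('a \<Rightarrow>\<^sub>0 'k::comm_ring_1) \<Rightarrow> ('b \<Rightarrow>\<^sub>0 'k)) \<Rightarrow> bool" where
  "lin_map L \<longleftrightarrow> (\<forall>x y. L (x + y) = L x + L y) \<and> (\<forall>c x. L (smul c x) = smul c (L x))"

lemma lin_map_add: "lin_map L \<Longrightarrow> L (x + y) = L x + L y"
  unfolding lin_map_def by blast

lemma lin_map_zero: "lin_map L \<Longrightarrow> L 0 = 0"
  unfolding lin_map_def by (metis smul_0_left)

lemma lin_map_sum: "lin_map L \<Longrightarrow> L (sum f A) = (\<Sum>a\<in>A. L (f a))"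
  by (induction A rule: infinite_finite_induct) (auto simp: lin_map_zero lin_map_add)

lemma lin_map_linext:
  fixes g :: "'b \<Rightarrow> ('c \<Rightarrow>\<^sub>0 'k::comm_ring_1)"
  shows "lin_map (linext g)"
  unfolding lin_map_def
proof (intro conjI allI)
  fix x y :: "'b \<Rightarrow>\<^sub>0 'k"
  let ?K = "Poly_Mapping.keys x \<union> Poly_Mapping.keys y"
  have "linext g (x + y) = (\<Sum>b\<in>?K. smul (Poly_Mapping.lookup (x + y) b) (g b))"
    by (rule linext_eq_sum_superset) (auto simp: keys_add)
  also have "\<dots> = (\<Sum>b\<in>?K. smul (Poly_Mapping.lookup x b) (g b))
                 + (\<Sum>b\<in>?K. smul (Poly_Mapping.lookup y b) (g b))"
    by (simp add: lookup_add smul_add_left sum.distrib)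
  also have "\<dots> = linext g x + linext g y"
    using linext_eq_sum_superset[of ?K x g] linext_eq_sum_superset[of ?K y g] by simp
  finally show "linext g (x + y) = linext g x + linext g y" .
next
  fix c x
  have "linext g (smul c x) = (\<Sum>b\<in>Poly_Mapping.keys x. smul (Poly_Mapping.lookup (smul c x) b) (g b))"
    by (rule linext_eq_sum_superset) (auto simp: keys_smul)
  also have "\<dots> = smul c (linext g x)"
    by (simp add: linext_def smul_sum smul_smul)
  finally show "linext g (smul c x) = smul c (linext g x)" .
qed

lemma lin_map_eq_linext: "lin_map L \<Longrightarrow> L x = linext (\<lambda>a. L (Poly_Mapping.single a 1)) x"
  by (subst poly_mapping_eq_sum_singles[of x]) (simp add: lin_map_sum linext_def lin_map_def)

lemma lin_map_eq_on_singles: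
  assumes "lin_map L" "lin_map M" "\<And>a. L (Poly_Mapping.single a 1) = M (Poly_Mapping.single a 1)"
  shows "L x = M x"
  using lin_map_eq_linext[OF assms(1), of x] lin_map_eq_linext[OF assms(2), of x] assms(3) by simp

lemma bilinear_eq_on_singles:
  assumes "\<And>y. lin_map (\<lambda>x. L x y)" "\<And>x. lin_map (L x)"
    and "\<And>y. lin_map (\<lambda>x. M x y)" "\<And>x. lin_map (M x)"
    and "\<And>a b. L (Poly_Mapping.single a 1) (Poly_Mapping.single b 1)
               = M (Poly_Mapping.single a 1) (Poly_Mapping.single b 1)"
  shows "L x y = M x y"
proof (rule lin_map_eq_on_singles[where L = "\<lambda>x. L x y" and M = "\<lambda>x. M x y"])
  show "L (Poly_Mapping.single a 1) y = M (Poly_Mapping.single a 1) y" for a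
    by (rule lin_map_eq_on_singles[OF assms(2,4,5)])
qed (fact assms(1,3))+

lemma lin_map_id: "lin_map (\<lambda>x. x)"
  by (simp add: lin_map_def)

lemma lin_map_comp: "lin_map L \<Longrightarrow> lin_map M \<Longrightarrow> lin_map (\<lambda>x. L (M x))"
  by (simp add: lin_map_def)

lemma lin_map_plus: "lin_map L \<Longrightarrow> lin_map M \<Longrightarrow> lin_map (\<lambda>x. L x + M x)"
  by (simp add: lin_map_def smul_add)

lemma lin_map_minus: "lin_map L \<Longrightarrow> lin_map M \<Longrightarrow> lin_map (\<lambda>x. L x - M x)"
  by (simp add: lin_map_def smul_diff)

lemma lin_map_bilinext_left: "lin_map (\<lambda>x. bilinext g x y)"
  unfolding bilinext_def by (rule lin_map_linext)

lemma lin_map_sum_fun: "(\<And>i. lin_map (L i)) \<Longrightarrow> lin_map (\<lambda>x. \<Sum>i\<in>A. L i x)"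
  unfolding lin_map_def by (auto simp: sum.distrib smul_sum)

lemma lin_map_smul_fun: "lin_map L \<Longrightarrow> lin_map (\<lambda>x. smul c (L x))"
  unfolding lin_map_def by (simp add: smul_add smul_smul mult.commute)

lemma bilinext_eq_sum:
  "bilinext g x y = (\<Sum>b\<in>Poly_Mapping.keys x. smul (Poly_Mapping.lookup x b) (linext (g b) y))"
  by (simp add: bilinext_def linext_def)

lemma lin_map_bilinext_right: "lin_map (\<lambda>y. bilinext g x y)"
  unfolding bilinext_eq_sum by (intro lin_map_sum_fun lin_map_smul_fun lin_map_linext)

section \<open>Multilinearity of the operations of Mag(V)\<close>

lemma lin_map_mult2_left: "lin_map M \<Longrightarrow> lin_map (\<lambda>x. mult2 (M x) z)"
  unfolding mult2_def by (rule lin_map_comp[OF lin_map_bilinext_left])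

lemma lin_map_mult2_right: "lin_map M \<Longrightarrow> lin_map (\<lambda>x. mult2 z (M x))"
  unfolding mult2_def by (rule lin_map_comp[OF lin_map_bilinext_right])

lemma lin_map_tensor_left: "lin_map M \<Longrightarrow> lin_map (\<lambda>x. tensor (M x) z)"
  unfolding tensor_def by (rule lin_map_comp[OF lin_map_bilinext_left])

lemma lin_map_tensor_right: "lin_map M \<Longrightarrow> lin_map (\<lambda>x. tensor z (M x))"
  unfolding tensor_def by (rule lin_map_comp[OF lin_map_bilinext_right])

lemma lin_map_mag_mult_left: "lin_map M \<Longrightarrow> lin_map (\<lambda>x. mag_mult (M x) z)"
  unfolding mag_mult_def by (rule lin_map_comp[OF lin_map_bilinext_left])

lemma lin_map_mag_mult_right: "lin_map M \<Longrightarrow> lin_map (\<lambda>x. mag_mult z (M x))"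
  unfolding mag_mult_def by (rule lin_map_comp[OF lin_map_bilinext_right])

lemma lin_map_Delta: "lin_map M \<Longrightarrow> lin_map (\<lambda>x. Delta (M x))"
  unfolding Delta_def by (rule lin_map_comp[OF lin_map_linext])

lemma lin_map_mag_inj: "lin_map M \<Longrightarrow> lin_map (\<lambda>x. mag_inj (M x))"
  unfolding mag_inj_def by (rule lin_map_comp[OF lin_map_linext])

lemmas lin_mapI = lin_map_id lin_map_plus lin_map_minus
  lin_map_mult2_left lin_map_mult2_right lin_map_tensor_left lin_map_tensor_right
  lin_map_mag_mult_left lin_map_mag_mult_right lin_map_Delta lin_map_mag_inj

lemma graft_None_right [simp]: "graft x None = x"
  by (cases x) auto

lemma mag_mult_single [simp]:
  "mag_mult (Poly_Mapping.single a 1) (Poly_Mapping.single b 1)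
     = Poly_Mapping.single (graft a b) (1::'k::comm_ring_1)"
  by (simp add: mag_mult_def)

lemma tensor_single [simp]:
  "tensor (Poly_Mapping.single a 1) (Poly_Mapping.single b 1) = Poly_Mapping.single (a, b) (1::'k::comm_ring_1)"
  by (simp add: tensor_def)

lemma mult2_single [simp]:
  "mult2 (Poly_Mapping.single p 1) (Poly_Mapping.single q 1)
     = Poly_Mapping.single (graft (fst p) (fst q), graft (snd p) (snd q)) (1::'k::comm_ring_1)"
  by (cases p; cases q) (simp add: mult2_def)

lemma Delta_single [simp]: "Delta (Poly_Mapping.single a (1::'k::comm_ring_1)) = DeltaB a"
  by (simp add: Delta_def)

lemma mag_mult_one_left [simp]: "mag_mult mag_one y = (y :: ('x, 'k::comm_ring_1) mag)"
  by (rule lin_map_eq_on_singles[where L = "mag_mult mag_one" and M = "\<lambda>y. y"])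
    (intro lin_mapI | simp add: mag_one_def)+

lemma mag_mult_one_right [simp]: "mag_mult y mag_one = (y :: ('x, 'k::comm_ring_1) mag)"
  by (rule lin_map_eq_on_singles[where L = "\<lambda>y. mag_mult y mag_one" and M = "\<lambda>y. y"])
    (intro lin_mapI | simp add: mag_one_def)+

lemma mult2_one_left:
  "mult2 (Poly_Mapping.single (None, None) 1) y = (y :: ('x, 'k::comm_ring_1) mag2)"
  by (rule lin_map_eq_on_singles[where L = "mult2 (Poly_Mapping.single (None, None) 1)" and M = "\<lambda>y. y"])
    (intro lin_mapI | simp)+

lemma mult2_one_right:
  "mult2 y (Poly_Mapping.single (None, None) 1) = (y :: ('x, 'k::comm_ring_1) mag2)"
  by (rule lin_map_eq_on_singles[where L = "\<lambda>y. mult2 y (Poly_Mapping.single (None, None) 1)" and M = "\<lambda>y. y"])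
    (intro lin_mapI | simp)+

lemma mult2_add_left: "mult2 (u + v) w = mult2 u w + mult2 v (w :: ('x, 'k::comm_ring_1) mag2)"
  by (rule lin_map_add[OF lin_map_mult2_left[OF lin_map_id]])

lemma mult2_add_right: "mult2 w (u + v) = mult2 w u + mult2 w (v :: ('x, 'k::comm_ring_1) mag2)"
  by (rule lin_map_add[OF lin_map_mult2_right[OF lin_map_id]])

lemma mult2_sum_left: "mult2 (sum f A) w = (\<Sum>a\<in>A. mult2 (f a) (w :: ('x, 'k::comm_ring_1) mag2))"
  by (rule lin_map_sum[OF lin_map_mult2_left[OF lin_map_id]])

lemma mult2_sum_right: "mult2 w (sum f A) = (\<Sum>a\<in>A. mult2 w (f a :: ('x, 'k::comm_ring_1) mag2))"
  by (rule lin_map_sum[OF lin_map_mult2_right[OF lin_map_id]])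

lemma mult2_tensor:
  "mult2 (tensor A B) (tensor C D) = tensor (mag_mult A C) (mag_mult B (D :: ('x, 'k::comm_ring_1) mag))"
proof (rule bilinear_eq_on_singles[where L = "\<lambda>A B. mult2 (tensor A B) (tensor C D)"
                                     and M = "\<lambda>A B. tensor (mag_mult A C) (mag_mult B D)"])
  fix a b
  show "mult2 (tensor (Poly_Mapping.single a 1) (Poly_Mapping.single b 1)) (tensor C D)
        = tensor (mag_mult (Poly_Mapping.single a 1) C) (mag_mult (Poly_Mapping.single b 1) D)"
    by (rule bilinear_eq_on_singles[where L = "\<lambda>C D. mult2 (tensor (Poly_Mapping.single a 1) (Poly_Mapping.single b 1)) (tensor C D)"
          and M = "\<lambda>C D. tensor (mag_mult (Poly_Mapping.single a 1) C) (mag_mult (Poly_Mapping.single b 1) D)"])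
      (intro lin_mapI | simp)+
qed (intro lin_mapI)+

section \<open>The coproduct of a product\<close>

lemma DeltaB_graft:
  "DeltaB (graft a b) = mult2 (DeltaB a) (Poly_Mapping.single (None, b) 1)
     + mult2 (Poly_Mapping.single (a, None) 1) (DeltaB b) - Poly_Mapping.single (a, b) (1::'k::comm_ring_1)"
  by (cases a; cases b) (simp_all add: mult2_one_left mult2_one_right mag_one_def mag_bas_def)

lemma Delta_mag_mult:
  "Delta (mag_mult x y) = mult2 (Delta x) (tensor mag_one y) + mult2 (tensor x mag_one) (Delta y)
     - tensor x (y :: ('x, 'k::comm_ring_1) mag)"
  by (rule bilinear_eq_on_singles[where L = "\<lambda>x y. Delta (mag_mult x y)"
        and M = "\<lambda>x y. mult2 (Delta x) (tensor mag_one y) + mult2 (tensor x mag_one) (Delta y) - tensor x y"])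
    (intro lin_mapI | simp add: mag_one_def DeltaB_graft)+

lemma Delta_mag_inj:
  "Delta (mag_inj v) = tensor (mag_inj v) mag_one + tensor mag_one (mag_inj (v :: 'x \<Rightarrow>\<^sub>0 'k::comm_ring_1))"
  by (rule lin_map_eq_on_singles[where L = "\<lambda>v. Delta (mag_inj v)"
        and M = "\<lambda>v. tensor (mag_inj v) mag_one + tensor mag_one (mag_inj v)"])
    (intro lin_mapI | simp add: mag_inj_def mag_one_def)+

lemma delta_mag_mult:
  "delta (mag_mult x y) = mult2 (delta x) (tensor mag_one y) + mult2 (tensor x mag_one) (delta y)
     + tensor x (y :: ('x, 'k::comm_ring_1) mag)"
proof -
  have "Delta x = delta x + tensor x mag_one + tensor mag_one x"
   and "Delta y = delta y + tensor y mag_one + tensor mag_one y"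
    by (simp_all add: delta_def)
  then show ?thesis
    unfolding delta_def[of "mag_mult x y"] Delta_mag_mult
    by (simp add: mult2_add_left mult2_add_right mult2_tensor algebra_simps)
qed

section \<open>Splitting planar binary trees\<close>

lemma nleaves_pos: "0 < nleaves t"
  by (induction t) auto

lemma ltake_eq_None_iff: "ltake n t = None \<longleftrightarrow> n = 0"
  by (induction t arbitrary: n) (auto split: option.splits simp: nleaves_pos)

lemma ltake_all: "nleaves t \<le> n \<Longrightarrow> ltake n t = Some t"
proof (induction t arbitrary: n)
  case (Nd a b)
  then show ?case using nleaves_pos[of a] nleaves_pos[of b] by (auto split: option.splits)
qed simp

lemma nleaves_ltake: "ltake n t = Some c \<Longrightarrow> nleaves c = min n (nleaves t)"
  by (induction t arbitrary: n c) (auto split: option.splits if_splits simp: ltake_eq_None_iff)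

lemma ldrop_eq_None_iff: "ldrop n t = None \<longleftrightarrow> nleaves t \<le> n"
  by (induction t arbitrary: n) (auto split: option.splits)

lemma ldrop_0: "ldrop 0 t = Some t"
  by (induction t) (auto simp: nleaves_pos)

lemma nleaves_ldrop: "ldrop n t = Some c \<Longrightarrow> nleaves c = nleaves t - n"
  by (induction t arbitrary: n c) (auto split: option.splits if_splits simp: ldrop_eq_None_iff)

lemma nleaves_split1: "0 < i \<Longrightarrow> i \<le> nleaves t \<Longrightarrow> nleaves (split1 i t) = i"
  using nleaves_ltake[of i t] ltake_eq_None_iff[of i t] by (auto simp: split1_def)

lemma nleaves_split2: "i < nleaves t \<Longrightarrow> nleaves (split2 i t) = nleaves t - i"
  using nleaves_ldrop[of i t] ldrop_eq_None_iff[of i t] by (auto simp: split2_def)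

lemma split_Nd_left:
  assumes "i < nleaves a"
  shows "split1 i (Nd a b) = split1 i a" and "split2 i (Nd a b) = Nd (split2 i a) b"
  using assms ldrop_eq_None_iff[of i a] by (auto simp: split1_def split2_def split: option.splits)

lemma split_Nd_root: shows "split1 (nleaves a) (Nd a b) = a" and "split2 (nleaves a) (Nd a b) = b"
  by (simp_all add: split1_def split2_def ltake_all ldrop_0)

lemma split_Nd_right:
  assumes "0 < j"
  shows "split1 (nleaves a + j) (Nd a b) = Nd a (split1 j b)"
    and "split2 (nleaves a + j) (Nd a b) = split2 j b"
  using assms ltake_eq_None_iff[of j b] by (auto simp: split1_def split2_def split: option.splits)

definition split_tensor :: "pbtree \<Rightarrow> ('x \<Rightarrow>\<^sub>0 'k::comm_ring_1) list \<Rightarrow> nat \<Rightarrow> ('x, 'k) mag2" where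
  "split_tensor t vs i = tensor (mag_elt (split1 i t) (take i vs)) (mag_elt (split2 i t) (drop i vs))"

definition split_tensor_sum :: "pbtree \<Rightarrow> ('x \<Rightarrow>\<^sub>0 'k::comm_ring_1) list \<Rightarrow> ('x, 'k) mag2" where
  "split_tensor_sum t vs = (\<Sum>i\<in>{1..<nleaves t}. split_tensor t vs i)"

lemma split_tensor_Nd_left:
  assumes "i < nleaves a"
  shows "split_tensor (Nd a b) vs i
           = mult2 (split_tensor a (take (nleaves a) vs) i) (tensor mag_one (mag_elt b (drop (nleaves a) vs)))"
proof -
  have "take (nleaves a - i) (drop i vs) = drop i (take (nleaves a) vs)"
    using assms by (simp add: take_drop)
  moreover have "drop (nleaves a - i) (drop i vs) = drop (nleaves a) vs"
    using assms by simp
  ultimately show ?thesis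
    using assms by (simp add: split_tensor_def split_Nd_left nleaves_split2 mult2_tensor)
qed

lemma split_tensor_Nd_root:
  "split_tensor (Nd a b) vs (nleaves a) = tensor (mag_elt a (take (nleaves a) vs)) (mag_elt b (drop (nleaves a) vs))"
  by (simp add: split_tensor_def split_Nd_root)

lemma split_tensor_Nd_right:
  assumes "0 < j" "j \<le> nleaves b"
  shows "split_tensor (Nd a b) vs (nleaves a + j)
           = mult2 (tensor (mag_elt a (take (nleaves a) vs)) mag_one) (split_tensor b (drop (nleaves a) vs) j)"
proof -
  have "drop (nleaves a) (take (nleaves a + j) vs) = take j (drop (nleaves a) vs)"
    by (simp add: take_drop add.commute)
  moreover have "drop j (drop (nleaves a) vs) = drop (nleaves a + j) vs"
    by (simp add: add.commute)
  ultimately show ?thesis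
    using assms by (simp add: split_tensor_def split_Nd_right nleaves_split1 mult2_tensor del: drop_drop)
qed

lemma sum_atLeastLessThan_split_at:
  fixes f :: "nat \<Rightarrow> 'a::comm_monoid_add"
  assumes "0 < p" "0 < q"
  shows "sum f {1..<p + q} = sum f {1..<p} + f p + (\<Sum>j\<in>{1..<q}. f (p + j))"
proof -
  have "sum f {1..<p + q} = sum f {1..<p} + sum f {p..<p + q}"
    using assms by (simp add: sum.atLeastLessThan_concat)
  also have "sum f {p..<p + q} = f p + sum f {Suc p..<p + q}"
    using assms by (simp add: sum.atLeast_Suc_lessThan)
  also have "sum f {Suc p..<p + q} = (\<Sum>j\<in>{1..<q}. f (p + j))"
    using sum.shift_bounds_nat_ivl[of f 1 p q] by (simp add: add.commute)
  finally show ?thesis by (simp add: add.assoc)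
qed

lemma split_tensor_sum_Nd:
  fixes a b :: pbtree and vs :: "('x \<Rightarrow>\<^sub>0 'k::comm_ring_1) list"
  defines "p \<equiv> nleaves a"
  shows "split_tensor_sum (Nd a b) vs
           = mult2 (split_tensor_sum a (take p vs)) (tensor mag_one (mag_elt b (drop p vs)))
           + tensor (mag_elt a (take p vs)) (mag_elt b (drop p vs))
           + mult2 (tensor (mag_elt a (take p vs)) mag_one) (split_tensor_sum b (drop p vs))"
proof -
  have "split_tensor_sum (Nd a b) vs
          = sum (split_tensor (Nd a b) vs) {1..<p} + split_tensor (Nd a b) vs p
            + (\<Sum>j\<in>{1..<nleaves b}. split_tensor (Nd a b) vs (p + j))"
    unfolding split_tensor_sum_def p_def nleaves.simps
    by (rule sum_atLeastLessThan_split_at[OF nleaves_pos nleaves_pos])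
  then show ?thesis
    unfolding split_tensor_sum_def p_def
    by (simp add: mult2_sum_left mult2_sum_right split_tensor_Nd_left split_tensor_Nd_root split_tensor_Nd_right)
qed

lemma delta_mag_elt: "delta (mag_elt t vs) = split_tensor_sum t (vs :: ('x \<Rightarrow>\<^sub>0 'k::comm_ring_1) list)"
proof (induction t arbitrary: vs)
  case (Lf u)
  then show ?case by (simp add: delta_def Delta_mag_inj split_tensor_sum_def)
next
  case (Nd a b)
  then show ?case by (simp add: delta_mag_mult split_tensor_sum_Nd)
qed

theorem lemma1p6:
  fixes t :: pbtree and vs :: "('x \<Rightarrow>\<^sub>0 'k::field) list"
  assumes "length vs = nleaves t"
  shows "delta (mag_elt t vs) =
    (\<Sum>i\<in>{1..<nleaves t}. tensor (mag_elt (split1 i t) (take i vs)) (mag_elt (split2 i t) (drop i vs)))"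
  using delta_mag_elt[of t vs] by (simp add: split_tensor_sum_def split_tensor_def)

end
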